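(* Let $\Gamma$ be a connected finite simple graph on $N\ge3$ vertices with $\varepsilon>\frac12$. Then: (1) if $u\ne w$ are vertices with $\deg u=\deg w=1$, there is no vertex $v$ with $u\sim v\sim w$; (2) there are no three distinct vertices $u\sim v\sim w$ with $\deg u,\deg v,\deg w\in\{1,2\}$.
   Context: For a finite simple graph $\Gamma=(V,E)$ without isolated vertices, $\deg v$ is the number of neighbours of $v$ and $\mathcal N(v)=\{w\in V: w\sim v\}$. The normalized Laplacian acts on functions $f:V\to\mathbb R$ by $\Delta f(v)=f(v)-\frac{1}{\deg v}\sum_{w\sim v}f(w)$; its eigenvalues are $0=\lambda_1\le\lambda_2\le\dots\le\lambda_N$, and $\varepsilon:=\min_i|1-\lambda_i|$. *)

theory Defs
  imports Main "HOL-Analysis.Analysis"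
begin

definition simple_graph :: "'a set \<Rightarrow> ('a \<Rightarrow> 'a \<Rightarrow> bool) \<Rightarrow> bool" where
  "simple_graph V E \<longleftrightarrow> finite V \<and> (\<forall>u v. E u v \<longrightarrow> u \<in> V \<and> v \<in> V)
     \<and> (\<forall>u v. E u v \<longrightarrow> E v u) \<and> (\<forall>v. \<not> E v v)"

definition connected_graph :: "'a set \<Rightarrow> ('a \<Rightarrow> 'a \<Rightarrow> bool) \<Rightarrow> bool" where
  "connected_graph V E \<longleftrightarrow> (\<forall>u\<in>V. \<forall>v\<in>V. E\<^sup>*\<^sup>* u v)"

definition neighbours :: "'a set \<Rightarrow> ('a \<Rightarrow> 'a \<Rightarrow> bool) \<Rightarrow> 'a \<Rightarrow> 'a set" where
  "neighbours V E v = {w \<in> V. E w v}"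

definition deg :: "'a set \<Rightarrow> ('a \<Rightarrow> 'a \<Rightarrow> bool) \<Rightarrow> 'a \<Rightarrow> nat" where
  "deg V E v = card (neighbours V E v)"

definition norm_laplacian :: "'a set \<Rightarrow> ('a \<Rightarrow> 'a \<Rightarrow> bool) \<Rightarrow> ('a \<Rightarrow> real) \<Rightarrow> 'a \<Rightarrow> real" where
  "norm_laplacian V E f v = f v - (\<Sum>w\<in>neighbours V E v. f w) / real (deg V E v)"

definition laplacian_eigenvalue :: "'a set \<Rightarrow> ('a \<Rightarrow> 'a \<Rightarrow> bool) \<Rightarrow> real \<Rightarrow> bool" where
  "laplacian_eigenvalue V E mu \<longleftrightarrow>
     (\<exists>f :: 'a \<Rightarrow> real. (\<exists>v\<in>V. f v \<noteq> 0) \<and> (\<forall>v\<in>V. norm_laplacian V E f v = mu * f v))"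

definition spectral_eps :: "'a set \<Rightarrow> ('a \<Rightarrow> 'a \<Rightarrow> bool) \<Rightarrow> real" where
  "spectral_eps V E = Min {\<bar>1 - mu\<bar> | mu. laplacian_eigenvalue V E mu}"

end

theory Submission
  imports Defs "HOL-Library.Function_Algebras"
begin

text \<open>Write P = D^-1 A for the random walk operator, so that the normalized Laplacian is I - P
  and \<epsilon> is the distance from 0 to the spectrum of P. The operator P is self-adjoint for the
  degree-weighted inner product <f, g> = \<Sum>v. deg v * f v * g v. If some f \<noteq> 0 satisfies
  |P f| \<le> |f| / 2, a minimiser g of the Rayleigh quotient |P g|^2 / |g|^2 is an eigenfunction of
  P^2 with eigenvalue s^2 \<le> 1/4; then P g + s g or g is an eigenfunction of P with eigenvalue s
  or -s, whence \<epsilon> \<le> 1/2. Each forbidden configuration carries such an f, supported on at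
  most four vertices of a short path; for instance A (1_u - 1_w) = 0 for two leaves u, w with a
  common neighbour.\<close>

lemma simple_graph_finite: "simple_graph V E \<Longrightarrow> finite V"
  unfolding simple_graph_def by blast

lemma simple_graph_sym: "simple_graph V E \<Longrightarrow> E u v \<Longrightarrow> E v u"
  unfolding simple_graph_def by blast

lemma simple_graph_irrefl: "simple_graph V E \<Longrightarrow> \<not> E v v"
  unfolding simple_graph_def by blast

lemma simple_graph_edge_vertices: "simple_graph V E \<Longrightarrow> E u v \<Longrightarrow> u \<in> V \<and> v \<in> V"
  unfolding simple_graph_def by blast

lemma neighbours_subset: "neighbours V E x \<subseteq> V"
  by (auto simp: neighbours_def)

lemma finite_neighbours: "finite V \<Longrightarrow> finite (neighbours V E x)"
  by (rule finite_subset[OF neighbours_subset])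

lemma mem_neighbours_iff: "simple_graph V E \<Longrightarrow> w \<in> neighbours V E v \<longleftrightarrow> E v w"
  unfolding simple_graph_def neighbours_def by blast

lemma neighbours_eqD:
  assumes "simple_graph V E" and "neighbours V E u = S"
  shows "E u x \<longleftrightarrow> x \<in> S" "E x u \<longleftrightarrow> x \<in> S"
  using assms unfolding neighbours_def simple_graph_def by blast+

lemma deg_ge_1:
  assumes G: "simple_graph V E" and "E u v"
  shows "deg V E u \<ge> 1"
proof -
  have "v \<in> neighbours V E u" using assms by (simp add: mem_neighbours_iff)
  then have "neighbours V E u \<noteq> {}" by blast
  then show ?thesis
    unfolding deg_def using finite_neighbours[OF simple_graph_finite[OF G]]
    by (simp add: Suc_le_eq card_gt_0_iff)
qed

lemma deg_ge_2:
  assumes G: "simple_graph V E" and "E u v" "E u w" "v \<noteq> w"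
  shows "deg V E u \<ge> 2"
proof -
  have "{v, w} \<subseteq> neighbours V E u" using assms by (simp add: mem_neighbours_iff)
  then have "card {v, w} \<le> deg V E u"
    unfolding deg_def by (rule card_mono[OF finite_neighbours[OF simple_graph_finite[OF G]]])
  then show ?thesis using \<open>v \<noteq> w\<close> by simp
qed

lemma neighbours_deg_1:
  assumes "simple_graph V E" and "deg V E u = 1" and "E u v"
  shows "neighbours V E u = {v}"
proof -
  obtain x where x: "neighbours V E u = {x}" using assms(2) unfolding deg_def by (rule card_1_singletonE)
  moreover have "v \<in> neighbours V E u" using assms(1,3) by (simp add: mem_neighbours_iff)
  ultimately show ?thesis by simp
qed

lemma deg_2_other_neighbour:
  assumes "simple_graph V E" and "deg V E u = 2" and "E u v"
  obtains a where "a \<noteq> v" "E u a" "neighbours V E u = {v, a}"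
proof -
  obtain x y where xy: "neighbours V E u = {x, y}" "x \<noteq> y"
    using assms(2) unfolding deg_def by (meson card_2_iff)
  moreover have "v \<in> {x, y}"
    using assms(1,3) xy(1) mem_neighbours_iff[of V E v u] by simp
  ultimately have "(if v = x then y else x) \<noteq> v" "neighbours V E u = {v, if v = x then y else x}"
    by auto
  moreover have "E u (if v = x then y else x)" using calculation(2) assms(1) by (simp add: neighbours_eqD)
  ultimately show ?thesis using that by blast
qed

lemma neighbours_deg_2:
  assumes "simple_graph V E" and "deg V E u = 2" and "E u v" "E u w" "v \<noteq> w"
  shows "neighbours V E u = {v, w}"
proof -
  obtain a where "neighbours V E u = {v, a}"
    using deg_2_other_neighbour[OF assms(1-3)] by blast
  moreover have "w \<in> neighbours V E u" using assms(1,4) by (simp add: mem_neighbours_iff)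
  ultimately show ?thesis using \<open>v \<noteq> w\<close> by auto
qed

lemma connected_deg_ge_1:
  assumes G: "simple_graph V E" and "connected_graph V E" and "2 \<le> card V" and v: "v \<in> V"
  shows "deg V E v \<ge> 1"
proof -
  have "V - {v} \<noteq> {}" using assms(3) v simple_graph_finite[OF G] by (auto simp: subset_singleton_iff)
  then obtain u where u: "u \<in> V" "u \<noteq> v" by blast
  have "E\<^sup>*\<^sup>* v u" using assms(2) v u(1) unfolding connected_graph_def by simp
  then obtain y where "E v y" using u(2) by (metis converse_rtranclpE)
  then show ?thesis by (rule deg_ge_1[OF G])
qed

section \<open>The random walk operator\<close>

definition adj_sum :: "'a set \<Rightarrow> ('a \<Rightarrow> 'a \<Rightarrow> bool) \<Rightarrow> ('a \<Rightarrow> real) \<Rightarrow> 'a \<Rightarrow> real" where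
  "adj_sum V E f x = (\<Sum>y\<in>neighbours V E x. f y)"

definition walk_op :: "'a set \<Rightarrow> ('a \<Rightarrow> 'a \<Rightarrow> bool) \<Rightarrow> ('a \<Rightarrow> real) \<Rightarrow> 'a \<Rightarrow> real" where
  "walk_op V E f x = adj_sum V E f x / real (deg V E x)"

definition deg_inner :: "'a set \<Rightarrow> ('a \<Rightarrow> 'a \<Rightarrow> bool) \<Rightarrow> ('a \<Rightarrow> real) \<Rightarrow> ('a \<Rightarrow> real) \<Rightarrow> real" where
  "deg_inner V E f g = (\<Sum>v\<in>V. real (deg V E v) * f v * g v)"

definition walk_inner :: "'a set \<Rightarrow> ('a \<Rightarrow> 'a \<Rightarrow> bool) \<Rightarrow> ('a \<Rightarrow> real) \<Rightarrow> ('a \<Rightarrow> real) \<Rightarrow> real" where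
  "walk_inner V E f g = (\<Sum>x\<in>V. adj_sum V E f x * adj_sum V E g x / real (deg V E x))"

lemma norm_laplacian_eq_walk_op: "norm_laplacian V E f v = f v - walk_op V E f v"
  unfolding norm_laplacian_def walk_op_def adj_sum_def by simp

lemma adj_sum_cong: "(\<And>y. y \<in> V \<Longrightarrow> f y = g y) \<Longrightarrow> adj_sum V E f x = adj_sum V E g x"
  unfolding adj_sum_def neighbours_def by (rule sum.cong) auto

lemma adj_sum_add_scale:
  "adj_sum V E (\<lambda>y. f y + t * g y) x = adj_sum V E f x + t * adj_sum V E g x"
  unfolding adj_sum_def by (simp add: sum.distrib sum_distrib_left)

lemma adj_sum_scale: "adj_sum V E (\<lambda>y. t * f y) x = t * adj_sum V E f x"
  unfolding adj_sum_def by (simp add: sum_distrib_left)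

lemma adj_sum_over_vertices:
  "finite V \<Longrightarrow> adj_sum V E f x = (\<Sum>y\<in>V. if E y x then f y else 0)"
  unfolding adj_sum_def neighbours_def by (simp add: sum.inter_filter)

lemma adj_sum_supported:
  assumes "finite V" "S \<subseteq> V" "\<And>y. y \<notin> S \<Longrightarrow> f y = 0"
  shows "adj_sum V E f x = (\<Sum>y\<in>S. if E y x then f y else 0)"
  unfolding adj_sum_over_vertices[OF assms(1)] using assms
  by (intro sum.mono_neutral_right) auto

lemma adj_sum_self_adjoint:
  assumes G: "simple_graph V E"
  shows "(\<Sum>x\<in>V. adj_sum V E f x * g x) = (\<Sum>x\<in>V. f x * adj_sum V E g x)"
proof -
  note fin = simple_graph_finite[OF G]
  have "(\<Sum>x\<in>V. adj_sum V E f x * g x) = (\<Sum>x\<in>V. \<Sum>y\<in>V. if E y x then f y * g x else 0)"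
    unfolding adj_sum_over_vertices[OF fin] sum_distrib_right by (intro sum.cong refl) auto
  also have "\<dots> = (\<Sum>y\<in>V. \<Sum>x\<in>V. if E y x then f y * g x else 0)"
    by (rule sum.swap)
  also have "\<dots> = (\<Sum>y\<in>V. \<Sum>x\<in>V. if E x y then f y * g x else 0)"
    by (intro sum.cong refl) (metis G simple_graph_sym)
  also have "\<dots> = (\<Sum>x\<in>V. f x * adj_sum V E g x)"
    unfolding adj_sum_over_vertices[OF fin] sum_distrib_left by (intro sum.cong refl) auto
  finally show ?thesis .
qed

lemma walk_op_add_scale:
  "walk_op V E (\<lambda>y. f y + t * g y) x = walk_op V E f x + t * walk_op V E g x"
  unfolding walk_op_def adj_sum_add_scale by (simp add: add_divide_distrib)

lemma deg_inner_commute: "deg_inner V E f g = deg_inner V E g f"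
  unfolding deg_inner_def by (simp add: algebra_simps)

lemma deg_inner_cong:
  "(\<And>v. v \<in> V \<Longrightarrow> f v = f' v) \<Longrightarrow> (\<And>v. v \<in> V \<Longrightarrow> g v = g' v)
    \<Longrightarrow> deg_inner V E f g = deg_inner V E f' g'"
  unfolding deg_inner_def by simp

lemma deg_inner_scale_left: "deg_inner V E (\<lambda>v. t * f v) g = t * deg_inner V E f g"
  unfolding deg_inner_def by (simp add: sum_distrib_left algebra_simps)

lemma deg_inner_scale: "deg_inner V E (\<lambda>v. t * f v) (\<lambda>v. t * g v) = t^2 * deg_inner V E f g"
  unfolding deg_inner_def sum_distrib_left by (intro sum.cong refl) (simp add: power2_eq_square)

lemma deg_inner_diff_left:
  "deg_inner V E (\<lambda>v. f v - f' v) g = deg_inner V E f g - deg_inner V E f' g"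
  unfolding deg_inner_def by (simp add: sum_subtractf algebra_simps)

lemma deg_inner_add_scale:
  "deg_inner V E (\<lambda>y. f y + t * g y) (\<lambda>y. f y + t * g y)
    = deg_inner V E f f + 2 * t * deg_inner V E f g + t^2 * deg_inner V E g g"
  unfolding deg_inner_def
  by (simp add: sum.distrib sum_distrib_left power2_eq_square algebra_simps)

lemma deg_inner_nonneg:
  assumes "\<forall>v\<in>V. deg V E v \<ge> 1"
  shows "0 \<le> deg_inner V E f f"
  unfolding deg_inner_def using assms by (intro sum_nonneg) (simp add: mult.assoc)

lemma deg_inner_pos:
  assumes "finite V" "\<forall>v\<in>V. deg V E v \<ge> 1" "z \<in> V" "f z \<noteq> 0"
  shows "0 < deg_inner V E f f"
  unfolding deg_inner_def
proof (rule sum_pos2[OF assms(1,3)])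
  have "0 < f z * f z" using assms(4) by (metis not_real_square_gt_zero)
  moreover have "0 < real (deg V E z)" using assms(2,3) by force
  ultimately show "0 < real (deg V E z) * f z * f z" by (simp add: mult.assoc)
qed (use assms(2) in \<open>simp add: mult.assoc\<close>)

lemma deg_inner_supported:
  assumes "finite V" "S \<subseteq> V" "\<And>x. x \<notin> S \<Longrightarrow> f x = 0"
  shows "deg_inner V E f f = (\<Sum>x\<in>S. real (deg V E x) * f x * f x)"
  unfolding deg_inner_def using assms by (intro sum.mono_neutral_right) auto

lemma walk_op_self_adjoint:
  assumes G: "simple_graph V E" and pos: "\<forall>v\<in>V. deg V E v \<ge> 1"
  shows "deg_inner V E (walk_op V E f) g = deg_inner V E f (walk_op V E g)"
proof -
  have "deg_inner V E (walk_op V E f) g = (\<Sum>x\<in>V. adj_sum V E f x * g x)"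
    unfolding deg_inner_def walk_op_def using pos by (intro sum.cong refl) force
  also have "\<dots> = (\<Sum>x\<in>V. f x * adj_sum V E g x)" by (rule adj_sum_self_adjoint[OF G])
  also have "\<dots> = deg_inner V E f (walk_op V E g)"
    unfolding deg_inner_def walk_op_def using pos by (intro sum.cong refl) force
  finally show ?thesis .
qed

lemma walk_inner_eq_deg_inner:
  assumes "\<forall>v\<in>V. deg V E v \<ge> 1"
  shows "walk_inner V E f g = deg_inner V E (walk_op V E f) (walk_op V E g)"
  unfolding walk_inner_def deg_inner_def walk_op_def using assms
  by (intro sum.cong refl) (force simp: field_simps)

lemma walk_inner_nonneg:
  assumes "\<forall>v\<in>V. deg V E v \<ge> 1"
  shows "0 \<le> walk_inner V E f f"
  using walk_inner_eq_deg_inner[OF assms] deg_inner_nonneg[OF assms] by simp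

lemma walk_inner_cong:
  assumes "\<And>v. v \<in> V \<Longrightarrow> f v = f' v" "\<And>v. v \<in> V \<Longrightarrow> g v = g' v"
  shows "walk_inner V E f g = walk_inner V E f' g'"
  unfolding walk_inner_def
  by (simp add: adj_sum_cong[of V f f', OF assms(1)] adj_sum_cong[of V g g', OF assms(2)])

lemma walk_inner_scale:
  "walk_inner V E (\<lambda>y. t * f y) (\<lambda>y. t * g y) = t^2 * walk_inner V E f g"
  unfolding walk_inner_def adj_sum_scale sum_distrib_left
  by (intro sum.cong refl) (simp add: power2_eq_square)

lemma walk_inner_add_scale:
  "walk_inner V E (\<lambda>y. f y + t * g y) (\<lambda>y. f y + t * g y)
    = walk_inner V E f f + 2 * t * walk_inner V E f g + t^2 * walk_inner V E g g"
  unfolding walk_inner_def adj_sum_add_scale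
  by (simp add: sum.distrib sum_distrib_left power2_eq_square add_divide_distrib algebra_simps)

lemma walk_inner_supported:
  assumes "finite V" "S \<subseteq> V" "\<And>x. x \<in> V \<Longrightarrow> x \<notin> S \<Longrightarrow> adj_sum V E f x = 0"
  shows "walk_inner V E f f = (\<Sum>x\<in>S. adj_sum V E f x * adj_sum V E f x / real (deg V E x))"
  unfolding walk_inner_def using assms by (intro sum.mono_neutral_right) auto

section \<open>Eigenvalues of the normalized Laplacian near 1\<close>

lemma linear_coeff_zero_if_nonneg:
  fixes a b :: real
  assumes "\<And>t. 0 \<le> a * t + b * t^2"
  shows "a = 0"
proof (rule ccontr)
  assume "a \<noteq> 0"
  define B where "B = \<bar>b\<bar> + 1"
  have B: "0 < B" "b \<le> B" unfolding B_def by auto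
  define t where "t = - a / (2 * B)"
  have "a * t + b * t^2 \<le> a * t + B * t^2"
    using B by (intro add_left_mono mult_right_mono) auto
  also have "\<dots> = - (a * a) / (4 * B)"
    unfolding t_def using B by (simp add: field_simps power2_eq_square)
  also have "\<dots> < 0"
    using \<open>a \<noteq> 0\<close> B by (auto simp: zero_less_mult_iff zero_less_divide_iff)
  finally show False using assms[of t] by linarith
qed

definition deg_normalised :: "'a set \<Rightarrow> ('a \<Rightarrow> 'a \<Rightarrow> bool) \<Rightarrow> ('a \<Rightarrow> real) \<Rightarrow> 'a \<Rightarrow> real" where
  "deg_normalised V E f = restrict (\<lambda>x. f x / sqrt (deg_inner V E f f)) V"

lemma deg_normalised_props:
  assumes G: "simple_graph V E" and pos: "\<forall>v\<in>V. deg V E v \<ge> 1"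
    and p: "0 < deg_inner V E f f"
  shows "deg_normalised V E f \<in> PiE V (\<lambda>_. {-1..1})"
    and "deg_inner V E (deg_normalised V E f) (deg_normalised V E f) = 1"
    and "walk_inner V E (deg_normalised V E f) (deg_normalised V E f)
           = walk_inner V E f f / deg_inner V E f f"
proof -
  let ?c = "1 / sqrt (deg_inner V E f f)"
  have c2: "?c^2 = 1 / deg_inner V E f f" using p by (simp add: power_divide)
  define \<psi> where "\<psi> = deg_normalised V E f"
  have \<psi>: "\<And>y. y \<in> V \<Longrightarrow> \<psi> y = ?c * f y" by (simp add: \<psi>_def deg_normalised_def)
  have "deg_inner V E \<psi> \<psi> = deg_inner V E (\<lambda>y. ?c * f y) (\<lambda>y. ?c * f y)"
    by (intro deg_inner_cong \<psi>)
  also have "\<dots> = ?c^2 * deg_inner V E f f"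
    by (rule deg_inner_scale)
  finally show \<psi>1: "deg_inner V E \<psi> \<psi> = 1" using c2 p by simp
  have "walk_inner V E \<psi> \<psi> = walk_inner V E (\<lambda>y. ?c * f y) (\<lambda>y. ?c * f y)"
    by (intro walk_inner_cong \<psi>)
  also have "\<dots> = ?c^2 * walk_inner V E f f"
    by (rule walk_inner_scale)
  finally show "walk_inner V E \<psi> \<psi> = walk_inner V E f f / deg_inner V E f f"
    using c2 by simp
  show "\<psi> \<in> PiE V (\<lambda>_. {-1..1})"
  proof (rule PiE_I)
    fix x assume x: "x \<in> V"
    have "real (deg V E x) * \<psi> x * \<psi> x \<le> deg_inner V E \<psi> \<psi>"
      unfolding deg_inner_def using x simple_graph_finite[OF G] pos
      by (intro member_le_sum) (auto simp: mult.assoc)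
    moreover have "\<psi> x * \<psi> x \<le> real (deg V E x) * \<psi> x * \<psi> x"
      using pos x by (simp add: mult.assoc mult_le_cancel_right1)
    ultimately have "\<psi> x ^ 2 \<le> 1" using \<psi>1 by (simp add: power2_eq_square)
    then show "\<psi> x \<in> {-1..1}" using abs_square_le_1 by (auto simp: abs_le_iff)
  qed (simp add: \<psi>_def deg_normalised_def)
qed

lemma rayleigh_minimiser_exists:
  assumes G: "simple_graph V E" and pos: "\<forall>v\<in>V. deg V E v \<ge> 1"
    and "0 < deg_inner V E f f"
  obtains g where "deg_inner V E g g = 1"
    "\<And>\<phi>. walk_inner V E g g * deg_inner V E \<phi> \<phi> \<le> walk_inner V E \<phi> \<phi>"
proof -
  note fin = simple_graph_finite[OF G]
  (* The quotient is minimised over the unit vectors in the cube [-1,1]^V, a compact set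
     that contains a positive multiple of every f with 0 < deg_inner V E f f. *)
  define X where "X = product_topology (\<lambda>_. euclideanreal) V"
  have proj: "\<And>v. v \<in> V \<Longrightarrow> continuous_map X euclideanreal (\<lambda>f. f v)"
    unfolding X_def using continuous_map_product_projection by force
  have "continuous_map X euclideanreal (\<lambda>f. adj_sum V E f x)" for x
    unfolding adj_sum_def using neighbours_subset[of V E x]
    by (intro continuous_intros proj finite_neighbours fin) auto
  then have walk: "continuous_map X euclideanreal (\<lambda>f. walk_inner V E f f)"
    unfolding walk_inner_def divide_inverse by (intro continuous_intros fin)
  have "continuous_map X euclideanreal (\<lambda>f. deg_inner V E f f)"
    unfolding deg_inner_def by (intro continuous_intros proj fin)
  then have "closedin X {f \<in> topspace X. deg_inner V E f f \<in> {1}}"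
    by (rule closedin_continuous_map_preimage) simp
  moreover have "compactin X (PiE V (\<lambda>_. {-1..1::real}))"
    unfolding X_def by (simp add: compactin_PiE)
  ultimately have "compactin X ({f \<in> topspace X. deg_inner V E f f \<in> {1}} \<inter> PiE V (\<lambda>_. {-1..1}))"
    (is "compactin X ?K") by (rule closed_Int_compactin)
  then have "compact ((\<lambda>f. walk_inner V E f f) ` ?K)"
    using image_compactin[OF _ walk] by simp
  have normalised_in_K: "deg_normalised V E f \<in> ?K"
    if "0 < deg_inner V E f f" for f
    using deg_normalised_props[OF G pos that] unfolding X_def by auto
  obtain g where g: "g \<in> ?K" and g_min: "\<And>f. f \<in> ?K \<Longrightarrow> walk_inner V E g g \<le> walk_inner V E f f"
    using compact_attains_inf[OF \<open>compact _\<close>] normalised_in_K[OF assms(3)] by blast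
  have "walk_inner V E g g * deg_inner V E \<phi> \<phi> \<le> walk_inner V E \<phi> \<phi>" for \<phi>
  proof (cases "0 < deg_inner V E \<phi> \<phi>")
    case True
    then show ?thesis
      using g_min[OF normalised_in_K[OF True]] deg_normalised_props[OF G pos True]
      by (simp add: pos_le_divide_eq)
  next
    case False
    then show ?thesis using deg_inner_nonneg[OF pos, of \<phi>] walk_inner_nonneg[OF pos, of \<phi>] by simp
  qed
  then show ?thesis using that g by blast
qed

lemma rayleigh_minimiser_eigen:
  assumes G: "simple_graph V E" and pos: "\<forall>v\<in>V. deg V E v \<ge> 1"
    and g1: "deg_inner V E g g = 1"
    and g_min: "\<And>\<phi>. walk_inner V E g g * deg_inner V E \<phi> \<phi> \<le> walk_inner V E \<phi> \<phi>"
    and z: "z \<in> V"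
  shows "walk_op V E (walk_op V E g) z = walk_inner V E g g * g z"
proof -
  define m where "m = walk_inner V E g g"
  have euler_lagrange: "walk_inner V E g h = m * deg_inner V E g h" for h
  proof -
    have "0 \<le> (2 * (walk_inner V E g h - m * deg_inner V E g h)) * t
              + (walk_inner V E h h - m * deg_inner V E h h) * t^2" for t
      using g_min[of "\<lambda>y. g y + t * h y"]
      unfolding walk_inner_add_scale deg_inner_add_scale g1 m_def[symmetric]
      by (simp add: algebra_simps)
    then show ?thesis using linear_coeff_zero_if_nonneg by fastforce
  qed
  define r where "r = (\<lambda>x. walk_op V E (walk_op V E g) x - m * g x)"
  have "deg_inner V E r h = 0" for h
  proof -
    have "deg_inner V E (walk_op V E (walk_op V E g)) h = walk_inner V E g h"
      unfolding walk_inner_eq_deg_inner[OF pos] walk_op_self_adjoint[OF G pos] ..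
    then show ?thesis
      unfolding r_def deg_inner_diff_left deg_inner_scale_left euler_lagrange by simp
  qed
  then have "deg_inner V E r r = 0" .
  then have "r z = 0" using deg_inner_pos[OF simple_graph_finite[OF G] pos z] by force
  then show ?thesis unfolding r_def m_def by simp
qed

lemma laplacian_eigenvalue_iff:
  "laplacian_eigenvalue V E \<mu> \<longleftrightarrow>
     (\<exists>f. (\<exists>v\<in>V. f v \<noteq> 0) \<and> (\<forall>v\<in>V. walk_op V E f v = (1 - \<mu>) * f v))"
proof -
  have "norm_laplacian V E f v = \<mu> * f v \<longleftrightarrow> walk_op V E f v = (1 - \<mu>) * f v" for f v
    unfolding norm_laplacian_eq_walk_op left_diff_distrib by arith
  then show ?thesis unfolding laplacian_eigenvalue_def by simp
qed

lemma laplacian_eigenvalue_near_1: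
  assumes G: "simple_graph V E" and pos: "\<forall>v\<in>V. deg V E v \<ge> 1"
    and f: "0 < deg_inner V E f f" and small: "walk_inner V E f f \<le> c^2 * deg_inner V E f f"
    and "0 \<le> c"
  shows "\<exists>\<mu>. laplacian_eigenvalue V E \<mu> \<and> \<bar>1 - \<mu>\<bar> \<le> c"
proof -
  obtain g where g1: "deg_inner V E g g = 1"
    and g_min: "\<And>\<phi>. walk_inner V E g g * deg_inner V E \<phi> \<phi> \<le> walk_inner V E \<phi> \<phi>"
    using rayleigh_minimiser_exists[OF G pos f] by blast
  define s where "s = sqrt (walk_inner V E g g)"
  have "walk_inner V E g g * deg_inner V E f f \<le> c^2 * deg_inner V E f f"
    using g_min[of f] small by linarith
  then have "walk_inner V E g g \<le> c^2" using f by simp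
  then have s: "0 \<le> s" "s \<le> c"
    unfolding s_def using walk_inner_nonneg[OF pos] \<open>0 \<le> c\<close> real_le_lsqrt by auto
  have PPg: "walk_op V E (walk_op V E g) z = s^2 * g z" if "z \<in> V" for z
    using rayleigh_minimiser_eigen[OF G pos g1 g_min that] walk_inner_nonneg[OF pos] by (simp add: s_def)
  (* Since P^2 g = s^2 g, the function h = P g + s g satisfies P h = s h;
     if h vanishes, then P g = -s g instead. *)
  define h where "h = (\<lambda>x. walk_op V E g x + s * g x)"
  have Ph: "walk_op V E h z = s * h z" if "z \<in> V" for z
    unfolding h_def walk_op_add_scale PPg[OF that] by (simp add: power2_eq_square algebra_simps)
  show ?thesis
  proof (cases "\<exists>z\<in>V. h z \<noteq> 0")
    case True
    then have "laplacian_eigenvalue V E (1 - s)"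
      unfolding laplacian_eigenvalue_iff using Ph by auto
    then show ?thesis using s by auto
  next
    case False
    have "\<exists>z\<in>V. g z \<noteq> 0"
      using g1 unfolding deg_inner_def by (metis (no_types, lifting) mult_zero_right sum.neutral zero_neq_one)
    moreover have "walk_op V E g z = - s * g z" if "z \<in> V" for z
      using False that unfolding h_def by (simp add: eq_neg_iff_add_eq_0)
    ultimately have "laplacian_eigenvalue V E (1 + s)"
      unfolding laplacian_eigenvalue_iff by auto
    then show ?thesis using s by auto
  qed
qed

lemma walk_eigenfunctions_orthogonal:
  assumes G: "simple_graph V E" and pos: "\<forall>v\<in>V. deg V E v \<ge> 1"
    and f: "\<And>v. v \<in> V \<Longrightarrow> walk_op V E f v = a * f v"
    and g: "\<And>v. v \<in> V \<Longrightarrow> walk_op V E g v = b * g v"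
    and "a \<noteq> b"
  shows "deg_inner V E f g = 0"
proof -
  have "a * deg_inner V E f g = deg_inner V E (walk_op V E f) g"
    using f by (simp add: deg_inner_cong[of V "walk_op V E f" "\<lambda>v. a * f v" g g] deg_inner_scale_left)
  also have "\<dots> = deg_inner V E f (walk_op V E g)" by (rule walk_op_self_adjoint[OF G pos])
  also have "\<dots> = deg_inner V E (walk_op V E g) f" by (rule deg_inner_commute)
  also have "\<dots> = b * deg_inner V E g f"
    using g by (simp add: deg_inner_cong[of V "walk_op V E g" "\<lambda>v. b * g v" f f] deg_inner_scale_left)
  also have "\<dots> = b * deg_inner V E f g" by (simp only: deg_inner_commute[of V E g f])
  finally show ?thesis using \<open>a \<noteq> b\<close> by simp
qed

(* HOL-Library.Function_Algebras provides the pointwise group structure on functions,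
   but no scalar multiplication. *)
definition scale_fun :: "real \<Rightarrow> ('a \<Rightarrow> real) \<Rightarrow> 'a \<Rightarrow> real" where
  "scale_fun c f = (\<lambda>x. c * f x)"

lemma vector_space_scale_fun: "vector_space scale_fun"
  by unfold_locales (auto simp: scale_fun_def fun_eq_iff algebra_simps)

lemma sum_fun_apply: "sum \<phi> S x = (\<Sum>f\<in>S. \<phi> f x)"
  by (induction S rule: infinite_finite_induct) auto

lemma deg_orthogonal_family_finite:
  fixes V :: "'a set"
  assumes fin: "finite V"
    and F_supp: "\<And>f x. f \<in> F \<Longrightarrow> x \<notin> V \<Longrightarrow> f x = 0"
    and F_pos: "\<And>f. f \<in> F \<Longrightarrow> 0 < deg_inner V E f f"
    and F_orth: "\<And>f g. f \<in> F \<Longrightarrow> g \<in> F \<Longrightarrow> f \<noteq> g \<Longrightarrow> deg_inner V E f g = 0"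
  shows "finite F"
proof -
  interpret fv: vector_space scale_fun by (rule vector_space_scale_fun)
  define \<delta> :: "'a \<Rightarrow> 'a \<Rightarrow> real" where "\<delta> z y = (if y = z then 1 else 0)" for z y
  have "fv.independent F"
  proof
    assume "fv.dependent F"
    then obtain T u w where T: "finite T" "T \<subseteq> F" "(\<Sum>v\<in>T. scale_fun (u v) v) = 0"
      and w: "w \<in> T" "u w \<noteq> 0"
      unfolding fv.dependent_explicit by blast
    have "0 = deg_inner V E (\<Sum>v\<in>T. scale_fun (u v) v) w" using T(3) by (simp add: deg_inner_def)
    also have "\<dots> = (\<Sum>x\<in>V. \<Sum>v\<in>T. u v * (real (deg V E x) * v x * w x))"
      unfolding deg_inner_def sum_fun_apply scale_fun_def
      by (intro sum.cong refl) (simp add: sum_distrib_left sum_distrib_right mult_ac)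
    also have "\<dots> = (\<Sum>v\<in>T. u v * deg_inner V E v w)"
      unfolding deg_inner_def sum_distrib_left by (rule sum.swap)
    also have "\<dots> = u w * deg_inner V E w w"
    proof -
      have "u v * deg_inner V E v w = 0" if "v \<in> T - {w}" for v
        using F_orth[of v w] that T(2) w(1) by auto
      then have "(\<Sum>v\<in>T - {w}. u v * deg_inner V E v w) = 0" by (rule sum.neutral[OF ballI])
      then show ?thesis by (simp add: sum.remove[OF T(1) w(1)])
    qed
    moreover have "0 < deg_inner V E w w" using F_pos T(2) w(1) by blast
    ultimately show False using w(2) by simp
  qed
  moreover have "F \<subseteq> fv.span (\<delta> ` V)"
  proof
    fix f assume f: "f \<in> F"
    have "f x = (\<Sum>z\<in>V. scale_fun (f z) (\<delta> z)) x" for x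
    proof -
      have "(\<Sum>z\<in>V. scale_fun (f z) (\<delta> z)) x = (\<Sum>z\<in>V. if x = z then f z else 0)"
        unfolding sum_fun_apply scale_fun_def \<delta>_def by (intro sum.cong) auto
      also have "\<dots> = f x" using fin F_supp[OF f] by simp
      finally show ?thesis by simp
    qed
    then have "f = (\<Sum>z\<in>V. scale_fun (f z) (\<delta> z))" ..
    also have "\<dots> \<in> fv.span (\<delta> ` V)"
      by (intro fv.span_sum fv.span_scale fv.span_base imageI)
    finally show "f \<in> fv.span (\<delta> ` V)" .
  qed
  ultimately show ?thesis using fv.independent_span_bound[OF finite_imageI[OF fin]] by blast
qed

lemma finite_laplacian_eigenvalues:
  assumes G: "simple_graph V E" and pos: "\<forall>v\<in>V. deg V E v \<ge> 1"
  shows "finite {\<mu>. laplacian_eigenvalue V E \<mu>}" (is "finite ?Eig")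
proof -
  have "\<forall>\<mu>\<in>?Eig. \<exists>f. (\<exists>v\<in>V. f v \<noteq> 0) \<and> (\<forall>v\<in>V. walk_op V E f v = (1 - \<mu>) * f v)"
    unfolding laplacian_eigenvalue_iff by blast
  from bchoice[OF this] obtain ef where ef: "\<forall>\<mu>\<in>?Eig.
      (\<exists>v\<in>V. ef \<mu> v \<noteq> 0) \<and> (\<forall>v\<in>V. walk_op V E (ef \<mu>) v = (1 - \<mu>) * ef \<mu> v)" ..
  define ef0 where "ef0 \<mu> x = (if x \<in> V then ef \<mu> x else 0)" for \<mu> x
  have walk_ef0: "walk_op V E (ef0 \<mu>) v = (1 - \<mu>) * ef0 \<mu> v" if "\<mu> \<in> ?Eig" "v \<in> V" for \<mu> v
  proof -
    have "adj_sum V E (ef0 \<mu>) v = adj_sum V E (ef \<mu>) v"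
      by (rule adj_sum_cong) (simp add: ef0_def)
    then show ?thesis using ef that unfolding walk_op_def ef0_def by simp
  qed
  have pos_ef0: "0 < deg_inner V E (ef0 \<mu>) (ef0 \<mu>)" if \<mu>: "\<mu> \<in> ?Eig" for \<mu>
  proof -
    obtain v where "v \<in> V" "ef \<mu> v \<noteq> 0" using conjunct1[OF ef[rule_format, OF \<mu>]] ..
    then show ?thesis
      using deg_inner_pos[OF simple_graph_finite[OF G] pos, of v "ef0 \<mu>"] by (simp add: ef0_def)
  qed
  have orth: "deg_inner V E (ef0 \<mu>) (ef0 \<nu>) = 0" if "\<mu> \<in> ?Eig" "\<nu> \<in> ?Eig" "\<mu> \<noteq> \<nu>" for \<mu> \<nu>
    using walk_eigenfunctions_orthogonal[OF G pos walk_ef0[OF that(1)] walk_ef0[OF that(2)]] that(3)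
    by simp
  have "inj_on ef0 ?Eig"
  proof (rule inj_onI, rule ccontr)
    fix \<mu> \<nu> assume "\<mu> \<in> ?Eig" "\<nu> \<in> ?Eig" "ef0 \<mu> = ef0 \<nu>" "\<mu> \<noteq> \<nu>"
    then show False using orth[of \<mu> \<nu>] pos_ef0[of \<mu>] by simp
  qed
  moreover have "finite (ef0 ` ?Eig)"
  proof (rule deg_orthogonal_family_finite[OF simple_graph_finite[OF G]])
    show "f x = 0" if "f \<in> ef0 ` ?Eig" "x \<notin> V" for f x
      using that by (auto simp: ef0_def)
    show "0 < deg_inner V E f f" if "f \<in> ef0 ` ?Eig" for f
      using that pos_ef0 by blast
    show "deg_inner V E f g = 0" if "f \<in> ef0 ` ?Eig" "g \<in> ef0 ` ?Eig" "f \<noteq> g" for f g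
      using that orth by blast
  qed
  ultimately show ?thesis using finite_imageD by blast
qed

lemma spectral_eps_le:
  assumes "simple_graph V E" and "\<forall>v\<in>V. deg V E v \<ge> 1" and "laplacian_eigenvalue V E \<mu>"
  shows "spectral_eps V E \<le> \<bar>1 - \<mu>\<bar>"
proof -
  have "{\<bar>1 - \<mu>\<bar> |\<mu>. laplacian_eigenvalue V E \<mu>} = (\<lambda>\<mu>. \<bar>1 - \<mu>\<bar>) ` {\<mu>. laplacian_eigenvalue V E \<mu>}"
    by auto
  then have "finite {\<bar>1 - \<mu>\<bar> |\<mu>. laplacian_eigenvalue V E \<mu>}"
    using finite_laplacian_eigenvalues[OF assms(1,2)] by simp
  then show ?thesis unfolding spectral_eps_def by (rule Min_le) (use assms(3) in blast)
qed

definition walk_norm_gt_half :: "'a set \<Rightarrow> ('a \<Rightarrow> 'a \<Rightarrow> bool) \<Rightarrow> bool" where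
  "walk_norm_gt_half V E \<longleftrightarrow>
     (\<forall>f. 0 < deg_inner V E f f \<longrightarrow> deg_inner V E f f < 4 * walk_inner V E f f)"

lemma walk_norm_gt_half_if_spectral_eps:
  assumes G: "simple_graph V E" and pos: "\<forall>v\<in>V. deg V E v \<ge> 1" and "1/2 < spectral_eps V E"
  shows "walk_norm_gt_half V E"
  unfolding walk_norm_gt_half_def
proof (intro allI impI)
  fix f assume f: "0 < deg_inner V E f f"
  show "deg_inner V E f f < 4 * walk_inner V E f f"
  proof (rule ccontr)
  assume "\<not> deg_inner V E f f < 4 * walk_inner V E f f"
  then have "walk_inner V E f f \<le> (1/2)^2 * deg_inner V E f f" by (simp add: power2_eq_square)
  then obtain \<mu> where "laplacian_eigenvalue V E \<mu>" "\<bar>1 - \<mu>\<bar> \<le> 1/2"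
    using laplacian_eigenvalue_near_1[OF G pos f] by force
  then show False using spectral_eps_le[OF G pos] \<open>1/2 < spectral_eps V E\<close> by fastforce
  qed
qed

lemma walk_norm_gt_halfD:
  "walk_norm_gt_half V E \<Longrightarrow> 0 < deg_inner V E f f \<Longrightarrow> deg_inner V E f f < 4 * walk_inner V E f f"
  unfolding walk_norm_gt_half_def by blast

section \<open>Forbidden configurations\<close>

lemma no_cherry_of_leaves:
  assumes G: "simple_graph V E" and W: "walk_norm_gt_half V E"
    and "u \<noteq> w" "deg V E u = 1" "deg V E w = 1" and e: "E u v" "E v w"
  shows False
proof -
  note fin = simple_graph_finite[OF G]
  have V: "u \<in> V" "w \<in> V" using simple_graph_edge_vertices[OF G] e by blast+
  have Nu: "neighbours V E u = {v}" using neighbours_deg_1[OF G assms(4) e(1)] .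
  have Nw: "neighbours V E w = {v}" using neighbours_deg_1[OF G assms(5) simple_graph_sym[OF G e(2)]] .
  define f where "f = (\<lambda>y. if y = u then 1 else if y = w then -1 else (0::real))"
  have "adj_sum V E f x = 0" for x
  proof -
    have "adj_sum V E f x = (\<Sum>p\<in>{u,w}. if E p x then f p else 0)"
      by (rule adj_sum_supported) (auto simp: f_def fin V)
    then show ?thesis using \<open>u \<noteq> w\<close> by (simp add: f_def neighbours_eqD[OF G Nu] neighbours_eqD[OF G Nw])
  qed
  then have "walk_inner V E f f = 0" unfolding walk_inner_def by simp
  moreover have "deg_inner V E f f = 2"
  proof -
    have "deg_inner V E f f = (\<Sum>x\<in>{u,w}. real (deg V E x) * f x * f x)"
      by (rule deg_inner_supported) (auto simp: f_def fin V)
    then show ?thesis using assms(3-5) by (simp add: f_def)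
  qed
  ultimately show False using walk_norm_gt_halfD[OF W, of f] by simp
qed

lemma no_path4_component:
  assumes G: "simple_graph V E" and W: "walk_norm_gt_half V E"
    and dist: "a \<noteq> u" "a \<noteq> v" "a \<noteq> w" "u \<noteq> v" "u \<noteq> w" "v \<noteq> w"
    and d: "deg V E a = 1" "deg V E u = 2" "deg V E v = 2" "deg V E w = 1"
    and e: "E a u" "E u v" "E v w"
  shows False
proof -
  note fin = simple_graph_finite[OF G]
  have V: "a \<in> V" "u \<in> V" "v \<in> V" "w \<in> V" using simple_graph_edge_vertices[OF G] e by blast+
  have Na: "neighbours V E a = {u}" using neighbours_deg_1[OF G d(1) e(1)] .
  have Nu: "neighbours V E u = {a, v}"
    using neighbours_deg_2[OF G d(2) simple_graph_sym[OF G e(1)] e(2) dist(2)] .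
  have Nv: "neighbours V E v = {u, w}"
    using neighbours_deg_2[OF G d(3) simple_graph_sym[OF G e(2)] e(3) dist(5)] .
  have Nw: "neighbours V E w = {v}" using neighbours_deg_1[OF G d(4) simple_graph_sym[OF G e(3)]] .
  (* The path a u v w is a whole component, and f is an eigenfunction of P for 1/2. *)
  define f where "f = (\<lambda>y. if y = a then 2 else if y = u then 1 else if y = v then -1
    else if y = w then -2 else (0::real))"
  have A: "adj_sum V E f x = (if x = a \<or> x = u then 1 else if x = v \<or> x = w then -1 else 0)" for x
  proof -
    have "adj_sum V E f x = (\<Sum>p\<in>{a,u,v,w}. if E p x then f p else 0)"
      by (rule adj_sum_supported) (auto simp: f_def fin V)
    then show ?thesis using dist
      by (simp add: f_def neighbours_eqD[OF G Na] neighbours_eqD[OF G Nu]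
          neighbours_eqD[OF G Nv] neighbours_eqD[OF G Nw])
  qed
  have "walk_inner V E f f = 3"
  proof -
    have "walk_inner V E f f = (\<Sum>x\<in>{a,u,v,w}. adj_sum V E f x * adj_sum V E f x / real (deg V E x))"
      by (rule walk_inner_supported) (auto simp: A fin V)
    then show ?thesis using dist d by (simp add: A)
  qed
  moreover have "deg_inner V E f f = 12"
  proof -
    have "deg_inner V E f f = (\<Sum>x\<in>{a,u,v,w}. real (deg V E x) * f x * f x)"
      by (rule deg_inner_supported) (auto simp: f_def fin V)
    then show ?thesis using dist d by (simp add: f_def)
  qed
  ultimately show False using walk_norm_gt_halfD[OF W, of f] by simp
qed

lemma no_leaf_path_of_deg_2:
  assumes G: "simple_graph V E" and W: "walk_norm_gt_half V E"
    and dist: "a \<noteq> u" "a \<noteq> v" "a \<noteq> w" "u \<noteq> v" "u \<noteq> w" "v \<noteq> w"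
    and d: "deg V E a = 1" "deg V E u = 2" "deg V E v = 2"
    and e: "E a u" "E u v" "E v w"
  shows False
proof -
  have "deg V E w \<ge> 1" using deg_ge_1[OF G simple_graph_sym[OF G e(3)]] .
  moreover have "deg V E w \<noteq> 1" using no_path4_component[OF G W dist d _ e] by blast
  ultimately have "deg V E w \<ge> 2" by linarith
  note fin = simple_graph_finite[OF G]
  have V: "a \<in> V" "v \<in> V" "w \<in> V" using simple_graph_edge_vertices[OF G] e by blast+
  have Na: "neighbours V E a = {u}" using neighbours_deg_1[OF G d(1) e(1)] .
  have Nv: "neighbours V E v = {u, w}"
    using neighbours_deg_2[OF G d(3) simple_graph_sym[OF G e(2)] e(3) dist(5)] .
  define f where "f = (\<lambda>y. if y = a then 1 else if y = v then -1 else (0::real))"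
  have A: "adj_sum V E f x = (if x = w then -1 else 0)" for x
  proof -
    have "adj_sum V E f x = (\<Sum>p\<in>{a,v}. if E p x then f p else 0)"
      by (rule adj_sum_supported) (auto simp: f_def fin V)
    then show ?thesis using dist by (simp add: f_def neighbours_eqD[OF G Na] neighbours_eqD[OF G Nv])
  qed
  have "walk_inner V E f f = 1 / real (deg V E w)"
  proof -
    have "walk_inner V E f f = (\<Sum>x\<in>{w}. adj_sum V E f x * adj_sum V E f x / real (deg V E x))"
      by (rule walk_inner_supported) (auto simp: A fin V)
    then show ?thesis by (simp add: A)
  qed
  moreover have "1 / real (deg V E w) \<le> 1/2" using \<open>deg V E w \<ge> 2\<close> by (simp add: divide_le_eq)
  moreover have "deg_inner V E f f = 3"
  proof -
    have "deg_inner V E f f = (\<Sum>x\<in>{a,v}. real (deg V E x) * f x * f x)"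
      by (rule deg_inner_supported) (auto simp: f_def fin V)
    then show ?thesis using dist d by (simp add: f_def)
  qed
  ultimately show False using walk_norm_gt_halfD[OF W, of f] by simp
qed

lemma no_leaf_deg_2_deg_2:
  assumes G: "simple_graph V E" and W: "walk_norm_gt_half V E"
    and dist: "u \<noteq> v" "u \<noteq> w" "v \<noteq> w"
    and d: "deg V E u = 1" "deg V E v = 2" "deg V E w = 2"
    and e: "E u v" "E v w"
  shows False
proof -
  obtain b where b: "b \<noteq> v" "E w b"
    using deg_2_other_neighbour[OF G d(3) simple_graph_sym[OF G e(2)]] by blast
  have "b \<noteq> w" using b(2) simple_graph_irrefl[OF G] by blast
  moreover have "b \<noteq> u"
    using neighbours_eqD(1)[OF G neighbours_deg_1[OF G d(1) e(1)], of w] b(2) dist(3)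
      simple_graph_sym[OF G] by auto
  ultimately show False
    using no_leaf_path_of_deg_2[OF G W dist(1,2) _ dist(3) _ _ d e b(2)] b(1) by blast
qed

lemma no_deg_2_pair_with_nonleaf_ends:
  assumes G: "simple_graph V E" and W: "walk_norm_gt_half V E" and "u \<noteq> w"
    and d: "deg V E u = 2" "deg V E w = 2"
    and Nu: "neighbours V E u = {v, a}" and Nw: "neighbours V E w = {v, b}"
    and da: "deg V E a \<ge> 2" and db: "deg V E b \<ge> 2"
  shows False
proof -
  note fin = simple_graph_finite[OF G]
  have V: "u \<in> V" "w \<in> V" "a \<in> V" "b \<in> V"
    using simple_graph_edge_vertices[OF G] neighbours_eqD[OF G Nu] neighbours_eqD[OF G Nw] by blast+
  have "a \<noteq> v" "b \<noteq> v" using d Nu Nw unfolding deg_def by auto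
  define f where "f = (\<lambda>y. if y = u then 1 else if y = w then -1 else (0::real))"
  have A: "adj_sum V E f x = (if x = a \<and> a \<noteq> b then 1 else if x = b \<and> a \<noteq> b then -1 else 0)" for x
  proof -
    have "adj_sum V E f x = (\<Sum>p\<in>{u,w}. if E p x then f p else 0)"
      by (rule adj_sum_supported) (auto simp: f_def fin V)
    also have "\<dots> = (if x = v \<or> x = a then 1 else 0) - (if x = v \<or> x = b then 1 else 0)"
      using \<open>u \<noteq> w\<close> by (simp add: f_def neighbours_eqD[OF G Nu] neighbours_eqD[OF G Nw])
    finally show ?thesis using \<open>a \<noteq> v\<close> \<open>b \<noteq> v\<close> by auto
  qed
  have "walk_inner V E f f \<le> 1"
  proof (cases "a = b")
    case True
    then show ?thesis unfolding walk_inner_def A by simp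
  next
    case False
    have "walk_inner V E f f = (\<Sum>x\<in>{a,b}. adj_sum V E f x * adj_sum V E f x / real (deg V E x))"
      by (rule walk_inner_supported) (auto simp: A fin V)
    also have "\<dots> = 1 / real (deg V E a) + 1 / real (deg V E b)" using False by (simp add: A)
    also have "\<dots> \<le> 1/2 + 1/2" using da db by (intro add_mono) (simp_all add: divide_le_eq)
    finally show ?thesis by simp
  qed
  moreover have "deg_inner V E f f = 4"
  proof -
    have "deg_inner V E f f = (\<Sum>x\<in>{u,w}. real (deg V E x) * f x * f x)"
      by (rule deg_inner_supported) (auto simp: f_def fin V)
    then show ?thesis using \<open>u \<noteq> w\<close> d by (simp add: f_def)
  qed
  ultimately show False using walk_norm_gt_halfD[OF W, of f] by simp
qed

lemma no_deg_2_path3: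
  assumes G: "simple_graph V E" and W: "walk_norm_gt_half V E"
    and dist: "u \<noteq> v" "u \<noteq> w" "v \<noteq> w"
    and d: "deg V E u = 2" "deg V E v = 2" "deg V E w = 2"
    and e: "E u v" "E v w"
  shows False
proof -
  obtain a where a: "a \<noteq> v" "E u a" "neighbours V E u = {v, a}"
    using deg_2_other_neighbour[OF G d(1) e(1)] by blast
  obtain b where b: "b \<noteq> v" "E w b" "neighbours V E w = {v, b}"
    using deg_2_other_neighbour[OF G d(3) simple_graph_sym[OF G e(2)]] by blast
  have "a \<noteq> u" "b \<noteq> w" using a(2) b(2) simple_graph_irrefl[OF G] by blast+
  have "deg V E a \<ge> 1" "deg V E b \<ge> 1"
    using deg_ge_1[OF G] simple_graph_sym[OF G] a(2) b(2) by blast+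
  then consider "deg V E a = 1" | "deg V E b = 1" | "deg V E a \<ge> 2" "deg V E b \<ge> 2" by linarith
  then show False
  proof cases
    case 1
    then have "a \<noteq> w" using d(3) by auto
    with 1 show False
      using no_leaf_path_of_deg_2[OF G W \<open>a \<noteq> u\<close> a(1) _ dist _ d(1,2) _ e]
        simple_graph_sym[OF G a(2)] by blast
  next
    case 2
    then have "b \<noteq> u" using d(1) by auto
    with 2 show False
      using no_leaf_path_of_deg_2[OF G W \<open>b \<noteq> w\<close> b(1) _ dist(3)[symmetric] dist(2)[symmetric]
          dist(1)[symmetric] _ d(3,2) _ simple_graph_sym[OF G e(2)] simple_graph_sym[OF G e(1)]]
        simple_graph_sym[OF G b(2)] by blast
  next
    case 3
    then show False using no_deg_2_pair_with_nonleaf_ends[OF G W dist(2) d(1,3) a(3) b(3)] by blast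
  qed
qed

lemma no_low_degree_path3:
  assumes G: "simple_graph V E" and W: "walk_norm_gt_half V E"
    and dist: "u \<noteq> v" "u \<noteq> w" "v \<noteq> w" and e: "E u v" "E v w"
    and d: "deg V E u \<in> {1,2}" "deg V E v \<in> {1,2}" "deg V E w \<in> {1,2}"
  shows False
proof -
  have dv: "deg V E v = 2"
    using deg_ge_2[OF G simple_graph_sym[OF G e(1)] e(2) dist(2)] d(2) by auto
  consider "deg V E u = 1" "deg V E w = 1" | "deg V E u = 1" "deg V E w = 2"
    | "deg V E u = 2" "deg V E w = 1" | "deg V E u = 2" "deg V E w = 2"
    using d(1,3) by auto
  then show False
  proof cases
    case 1
    then show False using no_cherry_of_leaves[OF G W dist(2) _ _ e] by blast
  next
    case 2
    then show False using no_leaf_deg_2_deg_2[OF G W dist] e dv by blast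
  next
    case 3
    then show False
      using no_leaf_deg_2_deg_2[OF G W dist(3)[symmetric] dist(2)[symmetric] dist(1)[symmetric]]
        simple_graph_sym[OF G e(2)] simple_graph_sym[OF G e(1)] dv by blast
  next
    case 4
    then show False using no_deg_2_path3[OF G W dist] e dv by blast
  qed
qed

theorem mainTheorem16:
  fixes V :: "'a set" and E :: "'a \<Rightarrow> 'a \<Rightarrow> bool"
  assumes "simple_graph V E"
    and "connected_graph V E"
    and "card V \<ge> 3"
    and "spectral_eps V E > 1/2"
  shows "(\<forall>u\<in>V. \<forall>w\<in>V. u \<noteq> w \<and> deg V E u = 1 \<and> deg V E w = 1
            \<longrightarrow> \<not> (\<exists>v\<in>V. E u v \<and> E v w))
       \<and> \<not> (\<exists>u\<in>V. \<exists>v\<in>V. \<exists>w\<in>V. u \<noteq> v \<and> v \<noteq> w \<and> u \<noteq> w \<and> E u v \<and> E v w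
            \<and> deg V E u \<in> {1,2} \<and> deg V E v \<in> {1,2} \<and> deg V E w \<in> {1,2})"
proof -
  note G = assms(1)
  have pos: "\<forall>v\<in>V. deg V E v \<ge> 1"
    using connected_deg_ge_1[OF G assms(2)] assms(3) by auto
  have W: "walk_norm_gt_half V E"
    by (rule walk_norm_gt_half_if_spectral_eps[OF G pos assms(4)])
  show ?thesis
  proof (intro conjI ballI impI notI)
    fix u w assume "u \<noteq> w \<and> deg V E u = 1 \<and> deg V E w = 1" "\<exists>v\<in>V. E u v \<and> E v w"
    then show False using no_cherry_of_leaves[OF G W] by blast
  next
    assume "\<exists>u\<in>V. \<exists>v\<in>V. \<exists>w\<in>V. u \<noteq> v \<and> v \<noteq> w \<and> u \<noteq> w \<and> E u v \<and> E v w
      \<and> deg V E u \<in> {1,2} \<and> deg V E v \<in> {1,2} \<and> deg V E w \<in> {1,2}"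
    then show False using no_low_degree_path3[OF G W] by blast
  qed
qed

end
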